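(* Let $\mathbf L=(L,\vee,\wedge,0,1)$ be a complemented lattice with $0\ne1$ and $a,b,c\in L$. Then: (i) $0\odot a=a\odot0=\{0\}$; (ii) $1\odot a=a\odot1=\{a\}$; (iii) $\{a\wedge b\}\le a\odot b\le\{b\}$, and if $b\le a$ then $a\odot b=\{b\}$; (iv) if $a\le b$ then $a\odot c\le_i b\odot c$ for $i=1,2$; (v) if $\mathbf L$ is modular, then $a\le b$ if and only if $a\odot b=\{a\}$, and moreover $(a\odot b)\odot b=a\odot b$.
   Context: For $a\in L$, $a^+:=\{x\in L\mid a\vee x=1,\ a\wedge x=0\}$ (the set of all complements of $a$); for $B\subseteq L$, $B^+:=\{x\in L\mid b\vee x=1\text{ and }b\wedge x=0\text{ for all }b\in B\}$. For $A,B\subseteq L$: $A\vee B:=\{x\vee y\mid x\in A,y\in B\}$, $A\wedge B:=\{x\wedge y\mid x\in A,y\in B\}$; $A\le B$ means $x\le y$ for all $x\in A,y\in B$; $A\le_1B$ means for every $x\in A$ there is $y\in B$ with $x\le y$; $A\le_2B$ means for every $y\in B$ there is $x\in A$ with $x\le y$. Singletons are identified with their elements. Define $a\odot b:=\{b\}\wedge(\{a\}\vee b^+)=\{b\wedge(a\vee x)\mid x\in b^+\}$ and, for $A,B\subseteq L$, $A\odot B:=B\wedge(A\vee B^+)$. *)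

theory Defs
  imports Main
begin

definition complemented :: "'a::bounded_lattice itself \<Rightarrow> bool" where
  "complemented _ \<longleftrightarrow> (\<forall>x::'a. \<exists>y. sup x y = top \<and> inf x y = bot)"

definition modular_lattice :: "'a::lattice itself \<Rightarrow> bool" where
  "modular_lattice _ \<longleftrightarrow> (\<forall>x y z::'a. x \<le> z \<longrightarrow> sup x (inf y z) = inf (sup x y) z)"

definition compls :: "'a::bounded_lattice \<Rightarrow> 'a set" where
  "compls a = {x. sup a x = top \<and> inf a x = bot}"

definition set_compls :: "'a::bounded_lattice set \<Rightarrow> 'a set" where
  "set_compls B = {x. \<forall>b\<in>B. sup b x = top \<and> inf b x = bot}"

definition set_sup :: "'a::lattice set \<Rightarrow> 'a set \<Rightarrow> 'a set" where
  "set_sup A B = {sup x y | x y. x \<in> A \<and> y \<in> B}"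

definition set_inf :: "'a::lattice set \<Rightarrow> 'a set \<Rightarrow> 'a set" where
  "set_inf A B = {inf x y | x y. x \<in> A \<and> y \<in> B}"

definition set_le :: "'a::order set \<Rightarrow> 'a set \<Rightarrow> bool" where
  "set_le A B \<longleftrightarrow> (\<forall>x\<in>A. \<forall>y\<in>B. x \<le> y)"

definition set_le1 :: "'a::order set \<Rightarrow> 'a set \<Rightarrow> bool" where
  "set_le1 A B \<longleftrightarrow> (\<forall>x\<in>A. \<exists>y\<in>B. x \<le> y)"

definition set_le2 :: "'a::order set \<Rightarrow> 'a set \<Rightarrow> bool" where
  "set_le2 A B \<longleftrightarrow> (\<forall>y\<in>B. \<exists>x\<in>A. x \<le> y)"

definition odot :: "'a::bounded_lattice \<Rightarrow> 'a \<Rightarrow> 'a set" where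
  "odot a b = set_inf {b} (set_sup {a} (compls b))"

definition odot_set :: "'a::bounded_lattice set \<Rightarrow> 'a set \<Rightarrow> 'a set" where
  "odot_set A B = set_inf B (set_sup A (set_compls B))"

end

theory Submission
  imports Defs
begin

text \<open>Every element of \<open>a \<odot> b\<close> has the form \<open>b \<and> (a \<or> x)\<close> with \<open>x\<close> a complement of \<open>b\<close>,
  so it lies between \<open>a \<and> b\<close> and \<open>b\<close> and depends monotonically on \<open>a\<close>; the cases with
  \<open>0\<close> or \<open>1\<close> as an argument collapse because \<open>0\<close> and \<open>1\<close> are each other's only complements.
  In a modular lattice, \<open>y \<le> b\<close> gives \<open>b \<and> (y \<or> x) = y \<or> (b \<and> x) = y\<close>, so the map
  \<open>y \<mapsto> b \<and> (y \<or> x)\<close> fixes the interval \<open>[0, b]\<close>, which contains \<open>a \<odot> b\<close>.\<close>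

lemma odot_altdef: "odot a b = {inf b (sup a x) | x. x \<in> compls b}"
  unfolding odot_def set_inf_def set_sup_def by blast

lemma set_compls_singleton: "set_compls {b} = compls b"
  unfolding set_compls_def compls_def by auto

lemma odot_set_singleton:
  "odot_set A {b} = {inf b (sup y x) | y x. y \<in> A \<and> x \<in> compls b}"
  unfolding odot_set_def set_inf_def set_sup_def set_compls_singleton by blast

lemma compls_nonempty:
  fixes b :: "'a::bounded_lattice"
  assumes "complemented TYPE('a)"
  shows "compls b \<noteq> {}"
  using assms unfolding complemented_def compls_def by blast

lemma compls_top: "compls (top::'a::bounded_lattice) = {bot}"
  unfolding compls_def by (auto simp: inf_absorb2)

lemma compls_bot: "compls (bot::'a::bounded_lattice) = {top}"
  unfolding compls_def by auto

lemma odot_eq_singletonI: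
  assumes "compls b \<noteq> {}" and "\<And>x. x \<in> compls b \<Longrightarrow> inf b (sup a x) = c"
  shows "odot a b = {c}"
  using assms unfolding odot_altdef by blast

lemma odot_le: "y \<in> odot a b \<Longrightarrow> y \<le> b"
  unfolding odot_altdef by auto

lemma inf_le_odot: "y \<in> odot a b \<Longrightarrow> inf a b \<le> y"
  unfolding odot_altdef by (auto intro!: le_infI intro: le_infI1)

lemma odot_absorb:
  assumes "b \<le> a" and "compls b \<noteq> {}"
  shows "odot a b = {b}"
  using assms by (auto intro!: odot_eq_singletonI simp: inf_absorb1 le_supI1)

lemma odot_bot_left:
  assumes "compls a \<noteq> {}"
  shows "odot bot a = {bot}"
  using assms by (rule odot_eq_singletonI) (simp add: compls_def)

lemma odot_bot_right: "odot a bot = {bot}"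
  unfolding odot_altdef compls_bot by auto

lemma odot_top_right: "odot a top = {a}"
  unfolding odot_altdef compls_top by auto

lemma odot_mono_le1: "a \<le> b \<Longrightarrow> set_le1 (odot a c) (odot b c)"
  unfolding set_le1_def odot_altdef by (blast intro: inf_mono sup_mono)

lemma odot_mono_le2: "a \<le> b \<Longrightarrow> set_le2 (odot a c) (odot b c)"
  unfolding set_le2_def odot_altdef by (blast intro: inf_mono sup_mono)

lemma modular_inf_sup_compl:
  fixes b :: "'a::bounded_lattice"
  assumes "modular_lattice TYPE('a)" and "y \<le> b" and "x \<in> compls b"
  shows "inf b (sup y x) = y"
proof -
  have "inf (sup y x) b = sup y (inf x b)"
    using assms(1,2) unfolding modular_lattice_def by metis
  also have "inf x b = bot"
    using assms(3) unfolding compls_def by (simp add: inf_commute)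
  finally show ?thesis by (simp add: inf_commute)
qed

lemma odot_eq_singleton_iff:
  fixes a b :: "'a::bounded_lattice"
  assumes "modular_lattice TYPE('a)" and "compls b \<noteq> {}"
  shows "a \<le> b \<longleftrightarrow> odot a b = {a}"
proof
  assume "a \<le> b"
  with assms show "odot a b = {a}"
    by (intro odot_eq_singletonI) (auto intro: modular_inf_sup_compl)
next
  assume "odot a b = {a}"
  then show "a \<le> b" using odot_le by blast
qed

lemma odot_set_below:
  fixes b :: "'a::bounded_lattice"
  assumes "modular_lattice TYPE('a)" and "compls b \<noteq> {}" and "\<And>y. y \<in> A \<Longrightarrow> y \<le> b"
  shows "odot_set A {b} = A"
proof -
  have fixed: "inf b (sup y x) = y" if "y \<in> A" and "x \<in> compls b" for x y
    using modular_inf_sup_compl[OF assms(1) assms(3)[OF that(1)] that(2)] .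
  obtain x0 where "x0 \<in> compls b"
    using assms(2) by blast
  then show ?thesis
    unfolding odot_set_singleton by (auto simp: fixed) (metis fixed)
qed

theorem proposition6:
  fixes a b c :: "'a::bounded_lattice"
  assumes compl: "complemented TYPE('a)"
    and nontriv: "(bot::'a) \<noteq> top"
  shows "(odot bot a = {bot} \<and> odot a bot = {bot})
    \<and> (odot top a = {a} \<and> odot a top = {a})
    \<and> (set_le {inf a b} (odot a b) \<and> set_le (odot a b) {b}
         \<and> (b \<le> a \<longrightarrow> odot a b = {b}))
    \<and> (a \<le> b \<longrightarrow> set_le1 (odot a c) (odot b c) \<and> set_le2 (odot a c) (odot b c))
    \<and> (modular_lattice TYPE('a) \<longrightarrow>
           ((a \<le> b \<longleftrightarrow> odot a b = {a}) \<and> odot_set (odot a b) {b} = odot a b))"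
proof -
  have ne: "compls y \<noteq> {}" for y :: 'a
    using compls_nonempty[OF compl] .
  have "set_le {inf a b} (odot a b)" and "set_le (odot a b) {b}"
    unfolding set_le_def by (simp_all add: inf_le_odot odot_le)
  moreover have "modular_lattice TYPE('a) \<Longrightarrow> odot_set (odot a b) {b} = odot a b"
    by (rule odot_set_below[OF _ ne odot_le])
  ultimately show ?thesis
    by (simp add: odot_bot_left ne odot_bot_right odot_absorb odot_top_right
        odot_mono_le1 odot_mono_le2 odot_eq_singleton_iff)
qed

end
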